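(* Let $H_0$ be a bounded operator on a Hilbert space with $\|H_0\|=1$, finite-dimensional kernel, and a bounded reflexive generalized inverse. Let $\mathcal{S}$ be a set of bounded operators of unit norm (the perturbations in the symmetry class). Then $\mathrm{Ker}\,H_0$ is stable against every $w\in\mathcal{S}$ if and only if for every $w\in\mathcal{S}$ there is $\lambda_0>0$ such that $\dim\mathrm{Ker}(H_0+\lambda w)=\dim\mathrm{Ker}\,H_0$ for all real $\lambda$ with $|\lambda|<\lambda_0$.
   Context: A reflexive generalized inverse of $H_0$ is an operator $H_0^{(-1)}$ with $H_0^{(-1)}H_0H_0^{(-1)}=H_0^{(-1)}$ and $H_0H_0^{(-1)}H_0=H_0$. For a closed subspace $\mathcal{V}$, $P_{\mathcal{V}}$ is the orthogonal projector onto it. $\mathrm{Ker}\,H_0$ is stable against a perturbation $w$ if $\lim_{\lambda\to0,\lambda\in\mathbb{R}}P_{\mathrm{Ker}(H_0+\lambda w)}=P_{\mathrm{Ker}H_0}$ in operator norm. *)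

theory Defs
  imports "HOL-Analysis.Analysis"
begin

definition ker_op :: "('a::real_normed_vector \<Rightarrow>\<^sub>L 'a) \<Rightarrow> 'a set" where
  "ker_op H = {x. blinfun_apply H x = 0}"

definition has_fin_dim :: "'a::real_vector set \<Rightarrow> nat \<Rightarrow> bool" where
  "has_fin_dim V n \<longleftrightarrow> (\<exists>B. finite B \<and> independent B \<and> span B = V \<and> card B = n)"

definition orth_proj :: "'a::real_inner set \<Rightarrow> 'a \<Rightarrow> 'a" where
  "orth_proj V x = (THE y. y \<in> V \<and> (\<forall>v\<in>V. inner (x - y) v = 0))"

definition refl_gen_inverse :: "('a::real_normed_vector \<Rightarrow>\<^sub>L 'a) \<Rightarrow> ('a \<Rightarrow>\<^sub>L 'a) \<Rightarrow> bool" where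
  "refl_gen_inverse G H \<longleftrightarrow> G o\<^sub>L H o\<^sub>L G = G \<and> H o\<^sub>L G o\<^sub>L H = H"

definition ker_stable :: "('a::{real_inner,complete_space} \<Rightarrow>\<^sub>L 'a) \<Rightarrow> ('a \<Rightarrow>\<^sub>L 'a) \<Rightarrow> bool" where
  "ker_stable H0 w \<longleftrightarrow>
     ((\<lambda>t::real. onorm (\<lambda>x. orth_proj (ker_op (H0 + t *\<^sub>R w)) x - orth_proj (ker_op H0) x))
        \<longlongrightarrow> 0) (at 0)"

end

(* Let P and P_t be the orthogonal projectors onto K = Ker H0 and V_t = Ker (H0 + t w).
   For x in V_t the vector x - G H0 x lies in K, and H0 x = -t w x, so
   |x - P x| <= |G| |w| |t| |x|: the gap from V_t to K is O(t).  Once this gap is below 1,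
   P is injective on V_t, hence dim V_t <= dim K.
   If the projectors converge, |P_t - P| < 1 makes P_t injective on K, giving equality of
   dimensions.  Conversely, equal dimensions make P a bijection of V_t onto K; this yields the
   reverse gap estimate and finally |P_t - P| <= 3 |G| |w| |t|. *)

theory Submission
  imports Defs
begin

lemma has_fin_dim_dim: "has_fin_dim V n \<Longrightarrow> dim V = n"
  unfolding has_fin_dim_def using dim_span_eq_card_independent by blast

lemma has_fin_dim_subspace: "has_fin_dim V n \<Longrightarrow> subspace V"
  unfolding has_fin_dim_def by auto

lemma has_fin_dim_if_inj_linear:
  fixes f :: "'a::real_vector \<Rightarrow> 'b::real_vector"
  assumes f: "linear f" and V: "subspace V" and inj: "inj_on f V"
    and image: "f ` V \<subseteq> U" and U: "has_fin_dim U n"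
  obtains m where "m \<le> n" "has_fin_dim V m"
proof -
  obtain B0 where B0: "finite B0" "span B0 = U" "card B0 = n"
    using U unfolding has_fin_dim_def by blast
  obtain B where B: "B \<subseteq> V" "independent B" "V \<subseteq> span B"
    by (rule basis_exists)
  have span_B: "span B = V"
    using B V by (simp add: span_minimal subset_antisym)
  have "independent (f ` B)"
    using linear_independent_injective_image[OF f B(2)] inj span_B by simp
  moreover have "f ` B \<subseteq> span B0"
    using B(1) image B0(2) span_superset by blast
  ultimately have "finite (f ` B) \<and> card (f ` B) \<le> card B0"
    using independent_span_bound[OF B0(1)] by blast
  moreover have "inj_on f B"
    using inj B(1) inj_on_subset by blast
  ultimately have "finite B" "card B \<le> n"
    using finite_imageD card_image B0(3) by fastforce+
  with B(2) span_B that show ?thesis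
    unfolding has_fin_dim_def by blast
qed

lemma linear_image_eq_if_inj_same_dim:
  fixes f :: "'a::real_vector \<Rightarrow> 'b::real_vector"
  assumes f: "linear f" and inj: "inj_on f V" and image: "f ` V \<subseteq> U"
    and V: "has_fin_dim V n" and U: "has_fin_dim U n"
  shows "f ` V = U"
proof
  show "f ` V \<subseteq> U" by (fact image)
  obtain B where B: "finite B" "independent B" "span B = V" "card B = n"
    using V unfolding has_fin_dim_def by blast
  obtain B0 where B0: "finite B0" "span B0 = U" "card B0 = n"
    using U unfolding has_fin_dim_def by blast
  have indep: "independent (f ` B)"
    using linear_independent_injective_image[OF f B(2)] inj B(3) by simp
  have card: "card (f ` B) = n"
    using card_image inj_on_subset[OF inj] span_superset B(3,4) by metis
  have sub: "f ` B \<subseteq> span B0"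
    using image B0(2) B(3) span_superset by blast
  show "U \<subseteq> f ` V"
  proof
    fix y assume "y \<in> U"
    show "y \<in> f ` V"
    proof (rule ccontr)
      assume "y \<notin> f ` V"
      then have y: "y \<notin> span (f ` B)"
        using span_linear_image[OF f] B(3) by simp
      then have "independent (insert y (f ` B))"
        using independent_insertI indep by blast
      moreover have "insert y (f ` B) \<subseteq> span B0"
        using sub \<open>y \<in> U\<close> B0(2) by blast
      ultimately have "card (insert y (f ` B)) \<le> n"
        using independent_span_bound[OF B0(1)] B0(3) by blast
      moreover have "card (insert y (f ` B)) = Suc n"
        using y span_superset card B(1) by (metis card_insert_disjoint finite_imageI subsetD)
      ultimately show False by simp
    qed
  qed
qed

lemma orth_proj_exists:
  fixes B :: "'a::real_inner set"
  assumes "finite B"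
  shows "\<exists>y\<in>span B. \<forall>v\<in>span B. inner (x - y) v = 0"
  using assms
proof (induction B arbitrary: x rule: finite_induct)
  case empty
  then show ?case by simp
next
  case (insert a B)
  from insert.IH obtain Q where Q: "\<And>x. Q x \<in> span B" "\<And>x v. v \<in> span B \<Longrightarrow> inner (x - Q x) v = 0"
    by metis
  define a' where "a' = a - Q a"
  have a'_orth: "inner a' v = 0" if "v \<in> span B" for v
    using Q(2)[OF that] by (simp add: a'_def)
  show ?case
  proof (cases "a' = 0")
    case True
    then have "span (insert a B) = span B"
      using Q(1)[of a] by (simp add: a'_def span_redundant)
    then show ?thesis using Q by metis
  next
    case False
    (* Gram--Schmidt: a' is orthogonal to span B, so adding the component of x - Q x along a'
       to Q x projects onto span (insert a B). *)
    define y where "y = Q x + (inner (x - Q x) a' / inner a' a') *\<^sub>R a'"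
    have "y \<in> span (insert a B)"
      unfolding y_def a'_def
      by (meson Q(1) insertI1 span_add span_base span_diff span_mono span_mul subsetD subset_insertI)
    moreover have "orthogonal (x - y) b" if "b \<in> insert a B" for b
    proof -
      have orth_B: "inner (x - y) v = 0" if "v \<in> span B" for v
        using Q(2)[OF that, of x] a'_orth[OF that]
        by (simp add: y_def inner_diff_left inner_add_left)
      have "inner (x - y) a' = 0"
        using False by (simp add: y_def inner_diff_left inner_add_left)
      then have "inner (x - y) a = 0"
        using orth_B[OF Q(1)] by (simp add: a'_def inner_diff_right)
      then show ?thesis
        using that orth_B span_base by (auto simp: orthogonal_def)
    qed
    ultimately show ?thesis
      using orthogonal_to_span by (metis orthogonal_def)
  qed
qed

lemma orth_proj_unique:
  fixes V :: "'a::real_inner set"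
  assumes "subspace V"
    and "y1 \<in> V" "\<forall>v\<in>V. inner (x - y1) v = 0"
    and "y2 \<in> V" "\<forall>v\<in>V. inner (x - y2) v = 0"
  shows "y1 = y2"
proof -
  have "y1 - y2 \<in> V"
    using assms by (simp add: subspace_diff)
  then have "inner (x - y2) (y1 - y2) - inner (x - y1) (y1 - y2) = 0"
    using assms by simp
  then have "inner (y1 - y2) (y1 - y2) = 0"
    by (simp add: inner_diff_left)
  then show ?thesis by simp
qed

lemma orth_proj_char:
  fixes V :: "'a::real_inner set"
  assumes "has_fin_dim V n"
  shows "orth_proj V x \<in> V \<and> (\<forall>v\<in>V. inner (x - orth_proj V x) v = 0)"
proof -
  have "\<exists>!y. y \<in> V \<and> (\<forall>v\<in>V. inner (x - y) v = 0)"
    using assms orth_proj_exists orth_proj_unique[OF has_fin_dim_subspace[OF assms]]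
    unfolding has_fin_dim_def by metis
  then show ?thesis
    unfolding orth_proj_def by (rule theI')
qed

lemma orth_proj_in: "has_fin_dim V n \<Longrightarrow> orth_proj V x \<in> V"
  using orth_proj_char by blast

lemma orth_proj_orthogonal: "has_fin_dim V n \<Longrightarrow> v \<in> V \<Longrightarrow> inner (x - orth_proj V x) v = 0"
  using orth_proj_char by blast

lemma orth_proj_eqI:
  "has_fin_dim V n \<Longrightarrow> y \<in> V \<Longrightarrow> (\<And>v. v \<in> V \<Longrightarrow> inner (x - y) v = 0) \<Longrightarrow> orth_proj V x = y"
  using orth_proj_unique orth_proj_char has_fin_dim_subspace by metis

lemma orth_proj_id: "has_fin_dim V n \<Longrightarrow> x \<in> V \<Longrightarrow> orth_proj V x = x"
  by (rule orth_proj_eqI) auto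

lemma orth_proj_pythagoras:
  assumes "has_fin_dim V n" "v \<in> V"
  shows "(norm (x - v))\<^sup>2 = (norm (x - orth_proj V x))\<^sup>2 + (norm (orth_proj V x - v))\<^sup>2"
proof -
  have "orth_proj V x - v \<in> V"
    using assms orth_proj_in has_fin_dim_subspace subspace_diff by blast
  then have "orthogonal (x - orth_proj V x) (orth_proj V x - v)"
    using assms(1) orth_proj_orthogonal orthogonal_def by blast
  then show ?thesis
    using norm_add_Pythagorean by fastforce
qed

lemma orth_proj_nearest:
  assumes "has_fin_dim V n" "v \<in> V"
  shows "norm (x - orth_proj V x) \<le> norm (x - v)"
  by (rule power2_le_imp_le) (use orth_proj_pythagoras[OF assms, of x] in simp_all)

lemma norm_sub_orth_proj_le: "has_fin_dim V n \<Longrightarrow> norm (x - orth_proj V x) \<le> norm x"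
  using orth_proj_nearest[of V n 0 x] has_fin_dim_subspace subspace_0 by force

lemma norm_orth_proj_le:
  assumes "has_fin_dim V n"
  shows "norm (orth_proj V x) \<le> norm x"
proof -
  have "0 \<in> V"
    using assms has_fin_dim_subspace subspace_0 by blast
  then have "(norm (orth_proj V x))\<^sup>2 \<le> (norm x)\<^sup>2"
    using orth_proj_pythagoras[OF assms, of 0 x] by simp
  then show ?thesis
    by (rule power2_le_imp_le) simp
qed

lemma bounded_linear_orth_proj:
  assumes V: "has_fin_dim V n"
  shows "bounded_linear (orth_proj V)"
proof (rule bounded_linear_intro[of _ 1])
  have V_subspace: "subspace V"
    using V by (rule has_fin_dim_subspace)
  note in_V = orth_proj_in[OF V] and orth = orth_proj_orthogonal[OF V]
  show "orth_proj V (x + y) = orth_proj V x + orth_proj V y" for x y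
  proof (rule orth_proj_eqI[OF V])
    show "orth_proj V x + orth_proj V y \<in> V"
      using in_V V_subspace by (simp add: subspace_add)
    show "inner (x + y - (orth_proj V x + orth_proj V y)) v = 0" if "v \<in> V" for v
      using orth[OF that, of x] orth[OF that, of y]
      by (simp add: inner_diff_left inner_add_left)
  qed
  show "orth_proj V (r *\<^sub>R x) = r *\<^sub>R orth_proj V x" for r x
  proof (rule orth_proj_eqI[OF V])
    show "r *\<^sub>R orth_proj V x \<in> V"
      using in_V V_subspace by (simp add: subspace_scale)
    show "inner (r *\<^sub>R x - r *\<^sub>R orth_proj V x) v = 0" if "v \<in> V" for v
      using orth[OF that, of x] by (simp flip: scaleR_diff_right)
  qed
  show "norm (orth_proj V x) \<le> norm x * 1" for x
    using norm_orth_proj_le[OF V] by simp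
qed

(* Kato's one-sided gap: \<delta>(V, K) \<le> e. *)
definition gap_le :: "real \<Rightarrow> 'a::real_inner set \<Rightarrow> 'a set \<Rightarrow> bool" where
  "gap_le e V K \<longleftrightarrow> (\<forall>x\<in>V. norm (x - orth_proj K x) \<le> e * norm x)"

lemma inj_on_orth_proj_if_gap_lt_1:
  assumes K: "has_fin_dim K n" and V: "subspace V" and e: "e < 1" and gap: "gap_le e V K"
  shows "inj_on (orth_proj K) V"
proof (rule linear_inj_on_iff_eq_0[THEN iffD2, OF _ V, rule_format])
  show "linear (orth_proj K)"
    using bounded_linear_orth_proj[OF K] by (rule bounded_linear.linear)
  fix x assume "x \<in> V" "orth_proj K x = 0"
  then have "norm x \<le> e * norm x"
    using gap unfolding gap_le_def by fastforce
  with e show "x = 0"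
    by (metis mult_le_cancel_right1 zero_less_norm_iff not_le)
qed

lemma has_fin_dim_if_gap_lt_1:
  assumes K: "has_fin_dim K n" and V: "subspace V" and e: "e < 1" and gap: "gap_le e V K"
  obtains m where "m \<le> n" "has_fin_dim V m"
  using has_fin_dim_if_inj_linear[OF _ V inj_on_orth_proj_if_gap_lt_1[OF assms] _ K]
    bounded_linear.linear[OF bounded_linear_orth_proj[OF K]] orth_proj_in[OF K]
  by blast

lemma dim_le_if_onorm_orth_proj_diff_lt_1:
  assumes K: "has_fin_dim K n" and V: "has_fin_dim V m"
    and close: "onorm (\<lambda>x. orth_proj V x - orth_proj K x) < 1"
  shows "n \<le> m"
proof -
  have lin: "bounded_linear (\<lambda>x. orth_proj V x - orth_proj K x)"
    using bounded_linear_sub bounded_linear_orth_proj K V by blast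
  have "inj_on (orth_proj V) K"
  proof (rule linear_inj_on_iff_eq_0[THEN iffD2, rule_format])
    show "linear (orth_proj V)"
      using bounded_linear_orth_proj[OF V] by (rule bounded_linear.linear)
    show "subspace K"
      using K by (rule has_fin_dim_subspace)
    fix y assume "y \<in> K" "orth_proj V y = 0"
    then have "norm y \<le> onorm (\<lambda>x. orth_proj V x - orth_proj K x) * norm y"
      using onorm[OF lin, of y] orth_proj_id[OF K] by simp
    with close show "y = 0"
      by (metis mult_le_cancel_right1 zero_less_norm_iff not_le)
  qed
  then obtain n' where "n' \<le> m" "has_fin_dim K n'"
    using has_fin_dim_if_inj_linear[OF _ has_fin_dim_subspace[OF K] _ _ V]
      bounded_linear.linear[OF bounded_linear_orth_proj[OF V]] orth_proj_in[OF V]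
    by blast
  then show ?thesis
    using has_fin_dim_dim K by metis
qed

lemma norm_orth_proj_le_if_orthogonal:
  assumes K: "has_fin_dim K n" and V: "has_fin_dim V m"
    and e: "0 \<le> e" and gap: "gap_le e V K"
    and orth: "\<And>k. k \<in> K \<Longrightarrow> inner a k = 0"
  shows "norm (orth_proj V a) \<le> e * norm a"
proof -
  define u where "u = orth_proj V a"
  have u: "u \<in> V"
    unfolding u_def using V by (rule orth_proj_in)
  have "(norm u)\<^sup>2 = inner a u"
    using orth_proj_orthogonal[OF V u, of a]
    by (simp add: u_def power2_norm_eq_inner inner_diff_left)
  also have "\<dots> = inner a (u - orth_proj K u)"
    using orth[OF orth_proj_in[OF K]] by (simp add: inner_diff_right)
  also have "\<dots> \<le> norm a * norm (u - orth_proj K u)"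
    by (rule norm_cauchy_schwarz)
  also have "\<dots> \<le> norm a * (e * norm u)"
    using gap u unfolding gap_le_def by (simp add: mult_left_mono)
  finally have "norm u * norm u \<le> (e * norm a) * norm u"
    by (simp add: power2_eq_square ac_simps)
  then show ?thesis
    using e unfolding u_def[symmetric]
    by (cases "u = 0") (auto intro: mult_right_le_imp_le)
qed

lemma norm_sub_orth_proj_le_if_gap:
  assumes K: "has_fin_dim K n" and V: "has_fin_dim V n"
    and e: "0 \<le> e" "e \<le> 1/2" and gap: "gap_le e V K"
    and y: "y \<in> K"
  shows "norm (y - orth_proj V y) \<le> 2 * e * norm y"
proof -
  have "orth_proj K ` V = K"
  proof (rule linear_image_eq_if_inj_same_dim[OF _ _ _ V K])
    show "linear (orth_proj K)"
      using bounded_linear_orth_proj[OF K] by (rule bounded_linear.linear)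
    show "inj_on (orth_proj K) V"
      using e by (intro inj_on_orth_proj_if_gap_lt_1[OF K has_fin_dim_subspace[OF V] _ gap]) simp
    show "orth_proj K ` V \<subseteq> K"
      using orth_proj_in[OF K] by blast
  qed
  with y obtain x where x: "x \<in> V" "orth_proj K x = y"
    by (metis imageE)
  then have close: "norm (x - y) \<le> e * norm x"
    using gap unfolding gap_le_def by blast
  have "norm x \<le> norm y + norm (x - y)"
    by (metis norm_triangle_sub add.commute)
  moreover have "e * norm x \<le> 1/2 * norm x"
    using e(2) norm_ge_zero by (rule mult_right_mono)
  ultimately have "norm x \<le> 2 * norm y"
    using close by linarith
  have "norm (y - orth_proj V y) \<le> norm (y - x)"
    using V x(1) by (rule orth_proj_nearest)
  also have "\<dots> \<le> e * norm x"
    using close by (simp add: norm_minus_commute)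
  also have "\<dots> \<le> e * (2 * norm y)"
    using \<open>norm x \<le> 2 * norm y\<close> e(1) by (rule mult_left_mono)
  finally show ?thesis
    by simp
qed

lemma onorm_orth_proj_diff_le:
  assumes K: "has_fin_dim K n" and V: "has_fin_dim V n"
    and e: "0 \<le> e" "e \<le> 1/2" and gap: "gap_le e V K"
  shows "onorm (\<lambda>x. orth_proj V x - orth_proj K x) \<le> 3 * e"
proof (rule onorm_bound)
  show "0 \<le> 3 * e"
    using e by simp
  fix z
  let ?P = "orth_proj K" and ?Q = "orth_proj V"
  have lin: "linear ?Q"
    using bounded_linear_orth_proj[OF V] by (rule bounded_linear.linear)
  have "?Q z - ?P z = ?Q (z - ?P z) - (?P z - ?Q (?P z))"
    using linear_diff[OF lin] by simp
  then have "norm (?Q z - ?P z) \<le> norm (?Q (z - ?P z)) + norm (?P z - ?Q (?P z))"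
    by (metis norm_triangle_ineq4)
  also have "\<dots> \<le> e * norm (z - ?P z) + 2 * e * norm (?P z)"
    using norm_orth_proj_le_if_orthogonal[OF K V e(1) gap orth_proj_orthogonal[OF K]]
      norm_sub_orth_proj_le_if_gap[OF K V e gap orth_proj_in[OF K]]
    by (rule add_mono)
  also have "\<dots> \<le> e * norm z + 2 * e * norm z"
    using norm_sub_orth_proj_le[OF K] norm_orth_proj_le[OF K] e(1)
    by (intro add_mono mult_left_mono) simp_all
  finally show "norm (?Q z - ?P z) \<le> 3 * e * norm z"
    by simp
qed

lemma subspace_ker_op: "subspace (ker_op H)"
  unfolding ker_op_def subspace_def
  by (simp add: blinfun.add_right blinfun.scaleR_right blinfun.zero_right)

lemma gap_le_ker_perturbed:
  fixes H0 G w :: "'a::real_inner \<Rightarrow>\<^sub>L 'a"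
  assumes inner_inverse: "H0 o\<^sub>L G o\<^sub>L H0 = H0" and K: "has_fin_dim (ker_op H0) n"
  shows "gap_le (norm G * norm w * \<bar>t\<bar>) (ker_op (H0 + t *\<^sub>R w)) (ker_op H0)"
  unfolding gap_le_def
proof
  fix x assume "x \<in> ker_op (H0 + t *\<^sub>R w)"
  then have H0x: "H0 x = - (t *\<^sub>R w x)"
    by (simp add: ker_op_def plus_blinfun.rep_eq scaleR_blinfun.rep_eq eq_neg_iff_add_eq_0)
  have "x - G (H0 x) \<in> ker_op H0"
    using arg_cong[OF inner_inverse, of "\<lambda>A. blinfun_apply A x"]
    by (simp add: ker_op_def blinfun.diff_right)
  then have "norm (x - orth_proj (ker_op H0) x) \<le> norm (G (H0 x))"
    using orth_proj_nearest[OF K, of _ x] by force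
  also have "\<dots> \<le> norm G * norm (H0 x)"
    by (rule norm_blinfun)
  also have "\<dots> \<le> norm G * (\<bar>t\<bar> * (norm w * norm x))"
    unfolding H0x using norm_blinfun[of w x] by (simp add: mult_left_mono)
  finally show "norm (x - orth_proj (ker_op H0) x) \<le> norm G * norm w * \<bar>t\<bar> * norm x"
    by (simp add: ac_simps)
qed

lemma eventually_at_0_mult_abs_less:
  assumes "0 < r"
  shows "\<forall>\<^sub>F t in at (0::real). c * \<bar>t\<bar> < r"
proof (rule order_tendstoD(2)[OF _ assms])
  show "((\<lambda>t. c * \<bar>t\<bar>) \<longlongrightarrow> 0) (at (0::real))"
    by (intro tendsto_mult_right_zero tendsto_rabs_zero tendsto_ident_at)
qed

lemma ker_stable_imp_eventually_has_fin_dim: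
  fixes H0 G w :: "'a::{real_inner,complete_space} \<Rightarrow>\<^sub>L 'a"
  assumes inner_inverse: "H0 o\<^sub>L G o\<^sub>L H0 = H0" and K: "has_fin_dim (ker_op H0) n"
    and stable: "ker_stable H0 w"
  shows "\<forall>\<^sub>F t in nhds 0. has_fin_dim (ker_op (H0 + t *\<^sub>R w)) n"
proof -
  define c where "c = norm G * norm w"
  have "\<forall>\<^sub>F t in at 0. onorm (\<lambda>x. orth_proj (ker_op (H0 + t *\<^sub>R w)) x - orth_proj (ker_op H0) x) < 1"
    using stable unfolding ker_stable_def by (rule order_tendstoD) simp
  moreover have "\<forall>\<^sub>F t in at 0. c * \<bar>t\<bar> < 1"
    by (rule eventually_at_0_mult_abs_less) simp
  ultimately have "\<forall>\<^sub>F t in at 0. has_fin_dim (ker_op (H0 + t *\<^sub>R w)) n"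
  proof eventually_elim
    case (elim t)
    obtain m where "m \<le> n" and V: "has_fin_dim (ker_op (H0 + t *\<^sub>R w)) m"
      using has_fin_dim_if_gap_lt_1[OF K subspace_ker_op elim(2)]
        gap_le_ker_perturbed[OF inner_inverse K, of w t, folded c_def]
      by blast
    moreover have "n \<le> m"
      using K V elim(1) by (rule dim_le_if_onorm_orth_proj_diff_lt_1)
    ultimately show ?case
      by (metis le_antisym)
  qed
  with K show ?thesis
    by (simp add: eventually_nhds_conv_at)
qed

lemma eventually_has_fin_dim_imp_ker_stable:
  fixes H0 G w :: "'a::{real_inner,complete_space} \<Rightarrow>\<^sub>L 'a"
  assumes inner_inverse: "H0 o\<^sub>L G o\<^sub>L H0 = H0" and K: "has_fin_dim (ker_op H0) n"
    and dim_const: "\<forall>\<^sub>F t in nhds 0. has_fin_dim (ker_op (H0 + t *\<^sub>R w)) n"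
  shows "ker_stable H0 w"
proof -
  define c where "c = norm G * norm w"
  have "\<forall>\<^sub>F t in at 0. c * \<bar>t\<bar> < 1/2"
    by (rule eventually_at_0_mult_abs_less) simp
  moreover have "\<forall>\<^sub>F t in at 0. has_fin_dim (ker_op (H0 + t *\<^sub>R w)) n"
    using dim_const by (simp add: eventually_nhds_conv_at)
  ultimately have "\<forall>\<^sub>F t in at 0.
      norm (onorm (\<lambda>x. orth_proj (ker_op (H0 + t *\<^sub>R w)) x - orth_proj (ker_op H0) x)) \<le> 3 * (c * \<bar>t\<bar>)"
  proof eventually_elim
    case (elim t)
    have "0 \<le> onorm (\<lambda>x. orth_proj (ker_op (H0 + t *\<^sub>R w)) x - orth_proj (ker_op H0) x)"
      using bounded_linear_sub[OF bounded_linear_orth_proj[OF elim(2)] bounded_linear_orth_proj[OF K]]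
      by (rule onorm_pos_le)
    moreover have "onorm (\<lambda>x. orth_proj (ker_op (H0 + t *\<^sub>R w)) x - orth_proj (ker_op H0) x) \<le> 3 * (c * \<bar>t\<bar>)"
      using elim gap_le_ker_perturbed[OF inner_inverse K, of w t, folded c_def]
      by (intro onorm_orth_proj_diff_le[OF K elim(2)]) (simp_all add: c_def)
    ultimately show ?case
      by simp
  qed
  moreover have "((\<lambda>t. 3 * (c * \<bar>t\<bar>)) \<longlongrightarrow> 0) (at (0::real))"
    by (intro tendsto_mult_right_zero tendsto_rabs_zero tendsto_ident_at)
  ultimately show ?thesis
    unfolding ker_stable_def by (rule Lim_null_comparison)
qed

lemma eventually_nhds_0_real_iff: "(\<forall>\<^sub>F t in nhds (0::real). P t) \<longleftrightarrow> (\<exists>l0>0. \<forall>t. \<bar>t\<bar> < l0 \<longrightarrow> P t)"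
  by (simp add: eventually_nhds_metric dist_real_def)

theorem mainTheorem12:
  fixes H0 :: "'a::{real_inner,complete_space} \<Rightarrow>\<^sub>L 'a"
    and S :: "('a \<Rightarrow>\<^sub>L 'a) set"
  assumes "norm H0 = 1"
    and "\<exists>n. has_fin_dim (ker_op H0) n"
    and "\<exists>G. refl_gen_inverse G H0"
    and "\<forall>w\<in>S. norm w = 1"
  shows "(\<forall>w\<in>S. ker_stable H0 w) \<longleftrightarrow>
         (\<forall>w\<in>S. \<exists>l0>0. \<forall>t::real. \<bar>t\<bar> < l0 \<longrightarrow>
              has_fin_dim (ker_op (H0 + t *\<^sub>R w)) (dim (ker_op H0)))"
proof -
  obtain n where K: "has_fin_dim (ker_op H0) n"
    using assms(2) by blast
  obtain G where "refl_gen_inverse G H0"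
    using assms(3) by blast
  then have inner_inverse: "H0 o\<^sub>L G o\<^sub>L H0 = H0"
    unfolding refl_gen_inverse_def by blast
  have "ker_stable H0 w \<longleftrightarrow> (\<forall>\<^sub>F t in nhds 0. has_fin_dim (ker_op (H0 + t *\<^sub>R w)) n)" for w
    using ker_stable_imp_eventually_has_fin_dim[OF inner_inverse K]
      eventually_has_fin_dim_imp_ker_stable[OF inner_inverse K] by blast
  then show ?thesis
    unfolding has_fin_dim_dim[OF K] eventually_nhds_0_real_iff by blast
qed

end
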